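(* Let $(G,\sigma)$ be a vertex-oriented 4-regular plane graph with a vertex $v$ such that $V(G)\setminus\{v\}$ is the disjoint union of two nonempty sets $A_1,A_2$, and the edges of $G$ not having both endpoints in the same set $A_1$ or $A_2$ are exactly six: two edges $e_1,e_2$ joining $v$ to $A_1$, two edges $e_3,e_4$ joining $v$ to $A_2$, and two edges $t,b$ each joining a vertex of $A_1$ to a vertex of $A_2$ (endpoints need not be distinct). Suppose $\sigma(v)=\{\{e_1,e_2\},\{e_3,e_4\}\}$, and that $G$ is drawn so that there are disjoint simple closed curves $S_1,S_2$ with $A_i$ inside $S_i$, $v$ outside both, the edges $t,e_1,e_2,b$ crossing $S_1$ in this cyclic order and $t,e_3,e_4,b$ crossing $S_2$ correspondingly. Let $G_1$ be the graph with vertex set $A_1\cup\{v_1\}$ ($v_1$ a new vertex) whose edges are the edges of $G$ with both ends in $A_1$, the edges $e_1,e_2$ with endpoint $v$ replaced by $v_1$, and new edges $t_1,b_1$ joining $v_1$ to the $A_1$-endpoints of $t$ and $b$ respectively; let $\sigma_1$ agree with $\sigma$ on $A_1$ (with $t_1,b_1$ in place of $t,b$) and $\sigma_1(v_1)=\{\{e_1,e_2\},\{t_1,b_1\}\}$. Define $(G_2,\sigma_2)$ symmetrically using $A_2$, $e_3,e_4$, a new vertex $v_2$, new edges $t_2,b_2$, and $\sigma_2(v_2)=\{\{e_3,e_4\},\{t_2,b_2\}\}$. If $(G_1,\sigma_1)$ and $(G_2,\sigma_2)$ both admit $k$-o-colourings, then $(G,\sigma)$ admits a $k$-o-colouring.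
   Context: Graphs may have loops and multiple edges. A 4-regular plane graph has a fixed planar embedding giving a cyclic (embedding) order of the four edge-ends at each vertex. Orientation of a vertex $v$: if $v$ has no loop, a partition of its four edges into two cells of two edges, each cell consisting of two edges consecutive in the embedding order at $v$; if $v$ has exactly one loop $e$ and other edges $f,g$, either $\{\{e,f\},\{e,g\}\}$ (transverse) or $\{\{f,g\},\{e\}\}$ (nontransverse); if $v$ has two loops $e_1,e_2$, the single cell $\{e_1,e_2\}$. A vertex-orientation assigns an orientation to each vertex. An o-colouring of $(G,\sigma)$ is an assignment of colours to edges such that at every vertex $v$ exactly two distinct colours appear on its incident edges and each cell of $\sigma(v)$ contains edges of both colours; a $k$-o-colouring uses at most $k$ colours. (Whether a colouring is an o-colouring depends only on the cells of the orientation, not on the embedding.) *)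

theory Defs
  imports Main "HOL-Library.Multiset"
begin

text \<open>Multigraphs with loops and multiple edges: vertex set V, edge set E, and
  ends e = set of endpoints of e (a singleton for a loop, a 2-set otherwise).\<close>

definition multigraph :: "'v set \<Rightarrow> 'e set \<Rightarrow> ('e \<Rightarrow> 'v set) \<Rightarrow> bool" where
  "multigraph V E ends \<longleftrightarrow> finite V \<and> finite E \<and>
     (\<forall>e\<in>E. ends e \<subseteq> V \<and> ends e \<noteq> {} \<and> finite (ends e) \<and> card (ends e) \<le> 2)"

definition inc_edges :: "'e set \<Rightarrow> ('e \<Rightarrow> 'v set) \<Rightarrow> 'v \<Rightarrow> 'e set" where
  "inc_edges E ends x = {e\<in>E. x \<in> ends e}"

text \<open>Multiset of edge-ends at x (a loop contributes two ends).\<close>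
definition inc_mset :: "'e set \<Rightarrow> ('e \<Rightarrow> 'v set) \<Rightarrow> 'v \<Rightarrow> 'e multiset" where
  "inc_mset E ends x = (\<Sum>e\<in>inc_edges E ends x. if ends e = {x} then {#e, e#} else {#e#})"

text \<open>A 4-regular multigraph with an embedding (rotation system): emb x lists the
  four edge-ends at x in their cyclic embedding order (loops appear twice).\<close>
definition embedded_4reg :: "'v set \<Rightarrow> 'e set \<Rightarrow> ('e \<Rightarrow> 'v set) \<Rightarrow> ('v \<Rightarrow> 'e list) \<Rightarrow> bool" where
  "embedded_4reg V E ends emb \<longleftrightarrow> multigraph V E ends \<and>
     (\<forall>x\<in>V. size (inc_mset E ends x) = 4 \<and> length (emb x) = 4 \<and> mset (emb x) = inc_mset E ends x)"

definition orientation_at ::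
  "'e set \<Rightarrow> ('e \<Rightarrow> 'v set) \<Rightarrow> ('v \<Rightarrow> 'e list) \<Rightarrow> 'v \<Rightarrow> 'e set set \<Rightarrow> bool" where
  "orientation_at E ends emb x C \<longleftrightarrow>
     (let L = {e\<in>E. ends e = {x}}; N = {e\<in>E. x \<in> ends e \<and> ends e \<noteq> {x}} in
       (L = {} \<and> (\<exists>i<4. C = {{emb x ! i, emb x ! ((i+1) mod 4)},
                                {emb x ! ((i+2) mod 4), emb x ! ((i+3) mod 4)}}))
     \<or> (\<exists>e f g. L = {e} \<and> N = {f, g} \<and> f \<noteq> g \<and>
                (C = {{e, f}, {e, g}} \<or> C = {{f, g}, {e}}))
     \<or> (\<exists>e1 e2. L = {e1, e2} \<and> e1 \<noteq> e2 \<and> C = {{e1, e2}}))"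

definition vertex_orientation ::
  "'v set \<Rightarrow> 'e set \<Rightarrow> ('e \<Rightarrow> 'v set) \<Rightarrow> ('v \<Rightarrow> 'e list) \<Rightarrow> ('v \<Rightarrow> 'e set set) \<Rightarrow> bool" where
  "vertex_orientation V E ends emb \<sigma> \<longleftrightarrow> (\<forall>x\<in>V. orientation_at E ends emb x (\<sigma> x))"

text \<open>o-colourings depend only on the cells of the orientation.\<close>
definition o_colouring ::
  "'v set \<Rightarrow> 'e set \<Rightarrow> ('e \<Rightarrow> 'v set) \<Rightarrow> ('v \<Rightarrow> 'e set set) \<Rightarrow> ('e \<Rightarrow> nat) \<Rightarrow> bool" where
  "o_colouring V E ends \<sigma> c \<longleftrightarrow>
     (\<forall>x\<in>V. card (c ` inc_edges E ends x) = 2 \<and>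
             (\<forall>C\<in>\<sigma> x. \<exists>f\<in>C. \<exists>g\<in>C. c f \<noteq> c g))"

definition k_o_colouring ::
  "'v set \<Rightarrow> 'e set \<Rightarrow> ('e \<Rightarrow> 'v set) \<Rightarrow> ('v \<Rightarrow> 'e set set) \<Rightarrow> nat \<Rightarrow> ('e \<Rightarrow> nat) \<Rightarrow> bool" where
  "k_o_colouring V E ends \<sigma> k c \<longleftrightarrow> o_colouring V E ends \<sigma> c \<and> card (c ` E) \<le> k"

text \<open>The split graph G_i: vertices Some a (a in A) plus the new vertex None (= v_i);
  edges: those with both ends in A, plus ea, eb (ends v replaced by v_i) and t, b
  (playing the roles of t_i, b_i: their non-A endpoint replaced by v_i).\<close>
definition proj :: "'v set \<Rightarrow> 'v \<Rightarrow> 'v option" where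
  "proj A x = (if x \<in> A then Some x else None)"

definition split_V :: "'v set \<Rightarrow> 'v option set" where
  "split_V A = insert None (Some ` A)"

definition split_E :: "'e set \<Rightarrow> ('e \<Rightarrow> 'v set) \<Rightarrow> 'v set \<Rightarrow> 'e \<Rightarrow> 'e \<Rightarrow> 'e \<Rightarrow> 'e \<Rightarrow> 'e set" where
  "split_E E ends A ea eb t b = {e\<in>E. ends e \<subseteq> A} \<union> {ea, eb, t, b}"

definition split_ends :: "('e \<Rightarrow> 'v set) \<Rightarrow> 'v set \<Rightarrow> 'e \<Rightarrow> 'v option set" where
  "split_ends ends A e = proj A ` ends e"

definition split_sigma ::
  "('v \<Rightarrow> 'e set set) \<Rightarrow> 'e \<Rightarrow> 'e \<Rightarrow> 'e \<Rightarrow> 'e \<Rightarrow> 'v option \<Rightarrow> 'e set set" where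
  "split_sigma \<sigma> ea eb t b y = (case y of None \<Rightarrow> {{ea, eb}, {t, b}} | Some a \<Rightarrow> \<sigma> a)"

end

theory Submission
  imports Defs
begin

text \<open>
  At the new vertex v1 of G1 only two colours occur and both cells {e1,e2}, {t1,b1}
  are bichromatic, so the colour pairs of c1 on {e1,e2} and on {t,b} coincide; the
  same holds for c2 at v2.  Renaming the colours of c2 injectively so that they agree
  with c1 on t and b (possible without exceeding k colours, since c1 and c2 both use
  at most k colours and colours are plentiful), we colour the edges of G1 by c1 and
  the remaining edges of G by the renamed c2.  Every vertex of A1 (resp. A2) sees
  exactly its incident edges in G1 (resp. G2), and at v the edges e1,e2,e3,e4 carry
  the colours of t and b on both sides, so the o-colouring conditions hold.
\<close>

text \<open>Given a finite set S containing P in an infinite universe, any number n of elements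
  avoiding P can be chosen while enlarging S as little as possible: reuse elements of
  S - P first, then fresh ones.\<close>

lemma padding_set:
  fixes S P :: "'c set"
  assumes inf: "infinite (UNIV :: 'c set)" and fin: "finite S" and P: "P \<subseteq> S"
  obtains T where "finite T" "card T = n" "T \<inter> P = {}" "card (S \<union> T) \<le> max (card S) (card P + n)"
proof (cases "n \<le> card (S - P)")
  case True
  then obtain T where T: "T \<subseteq> S - P" "card T = n" "finite T" by (rule obtain_subset_with_card_n)
  then have "S \<union> T = S" by auto
  with T show ?thesis using that[of T] by auto
next
  case False
  have "infinite (UNIV - S)" using inf fin by simp
  then obtain F where F: "finite F" "card F = n - card (S - P)" "F \<subseteq> UNIV - S"
    using infinite_arbitrarily_large by blast
  have finSP: "finite (S - P)" using fin by simp
  have cardS: "card S = card (S - P) + card P"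
    using fin P by (metis card_Diff_subset finite_subset card_mono le_add_diff_inverse2)
  have "card ((S - P) \<union> F) = n" using F False finSP by (subst card_Un_disjoint) auto
  moreover have "card (S \<union> ((S - P) \<union> F)) = card P + n"
  proof -
    have "S \<union> ((S - P) \<union> F) = S \<union> F" by auto
    moreover have "card (S \<union> F) = card S + card F" using F fin by (intro card_Un_disjoint) auto
    ultimately show ?thesis using F(2) False cardS by simp
  qed
  moreover have "((S - P) \<union> F) \<inter> P = {}" using F(3) P by auto
  ultimately show ?thesis using that[of "(S - P) \<union> F"] F finSP by auto
qed

lemma colour_renaming:
  fixes S1 S2 :: "'c set"
  assumes inf: "infinite (UNIV :: 'c set)" and fin: "finite S1" "finite S2"
    and p: "p1 \<in> S1" "q1 \<in> S1" "p1 \<noteq> q1" and q: "p2 \<in> S2" "q2 \<in> S2" "p2 \<noteq> q2"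
    and k: "card S1 \<le> k" "card S2 \<le> k"
  obtains f where "inj_on f S2" "f p2 = p1" "f q2 = q1" "card (S1 \<union> f ` S2) \<le> k"
proof -
  define D where "D = S2 - {p2, q2}"
  have pq2: "{p2, q2} \<subseteq> S2" using q by simp
  have "card D = card S2 - 2" using card_Diff_subset[OF _ pq2] q(3) unfolding D_def by simp
  moreover have "2 \<le> card S2" using card_mono[OF fin(2) pq2] q(3) by simp
  ultimately have cardD: "card D + 2 = card S2" by simp
  obtain T where T: "finite T" "card T = card D" "T \<inter> {p1, q1} = {}"
    and cardT: "card (S1 \<union> T) \<le> max (card S1) (card {p1, q1} + card D)"
    using padding_set[OF inf fin(1), of "{p1, q1}"] p by blast
  have "finite D" using fin(2) unfolding D_def by simp
  then obtain h where h: "bij_betw h D T" using finite_same_card_bij T(1,2) by metis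
  define f where "f = h(p2 := p1, q2 := q1)"
  have f_on_D: "\<And>x. x \<in> D \<Longrightarrow> f x = h x" unfolding f_def D_def by simp
  have fD: "f ` D = T" using h f_on_D unfolding bij_betw_def by (metis image_cong)
  have S2: "S2 = insert p2 (insert q2 D)" using q unfolding D_def by auto
  have "inj_on f D" using h f_on_D unfolding bij_betw_def by (metis inj_on_cong)
  moreover have fp: "f p2 = p1" and fq: "f q2 = q1" using q(3) unfolding f_def by auto
  moreover have "p2 \<notin> D" "q2 \<notin> D" unfolding D_def by auto
  ultimately have inj: "inj_on f S2" using fD T(3) p(3) q(3) unfolding S2 by (simp add: inj_on_insert)
  have "f ` S2 = {p1, q1} \<union> T" using fD fp fq unfolding S2 by auto
  then have "S1 \<union> f ` S2 = S1 \<union> T" using p by auto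
  then have "card (S1 \<union> f ` S2) \<le> k" using cardT cardD k p(3) by auto
  then show ?thesis by (rule that[OF inj fp fq])
qed

definition o_condition :: "'e set \<Rightarrow> 'e set set \<Rightarrow> ('e \<Rightarrow> 'c) \<Rightarrow> bool" where
  "o_condition I Cs c \<longleftrightarrow> card (c ` I) = 2 \<and> (\<forall>C\<in>Cs. \<exists>f\<in>C. \<exists>g\<in>C. c f \<noteq> c g)"

lemma o_colouring_iff_o_condition:
  "o_colouring V E ends \<sigma> c \<longleftrightarrow> (\<forall>x\<in>V. o_condition (inc_edges E ends x) (\<sigma> x) c)"
  unfolding o_colouring_def o_condition_def ..

text \<open>The vertex condition is invariant under an injective renaming of colours, since
  cells consist of incident edges.\<close>

lemma o_condition_rename:
  assumes ok: "o_condition I Cs c'" and cells: "\<forall>C\<in>Cs. C \<subseteq> I"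
    and inj: "inj_on g (c' ` I)" and c: "\<forall>e\<in>I. c e = g (c' e)"
  shows "o_condition I Cs c"
proof -
  have "c ` I = g ` c' ` I" using c by (auto simp: image_image intro: image_cong)
  then have "card (c ` I) = card (c' ` I)" using inj by (simp add: card_image)
  moreover have "\<exists>f\<in>C. \<exists>h\<in>C. c f \<noteq> c h" if C: "C \<in> Cs" for C
  proof -
    obtain f h where fh: "f \<in> C" "h \<in> C" "c' f \<noteq> c' h" using ok C unfolding o_condition_def by blast
    then have "f \<in> I" "h \<in> I" using cells C by auto
    then have "c f \<noteq> c h" using fh(3) c inj by (metis image_eqI inj_on_contraD)
    then show ?thesis using fh by blast
  qed
  ultimately show ?thesis using ok unfolding o_condition_def by simp
qed

lemma o_condition_two_pairs:
  "o_condition {a, b, c, d} {{a, b}, {c, d}} col \<longleftrightarrow>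
     col a \<noteq> col b \<and> col c \<noteq> col d \<and> {col a, col b} = {col c, col d}"
proof
  assume ok: "o_condition {a, b, c, d} {{a, b}, {c, d}} col"
  then have ab: "col a \<noteq> col b" and cd: "col c \<noteq> col d" unfolding o_condition_def by auto
  have two: "card {col a, col b, col c, col d} = 2" using ok unfolding o_condition_def by simp
  have "{col a, col b} = {col a, col b, col c, col d}" by (rule card_subset_eq) (use two ab in auto)
  moreover have "{col c, col d} = {col a, col b, col c, col d}" by (rule card_subset_eq) (use two cd in auto)
  ultimately show "col a \<noteq> col b \<and> col c \<noteq> col d \<and> {col a, col b} = {col c, col d}"
    using ab cd by simp
next
  assume pairs: "col a \<noteq> col b \<and> col c \<noteq> col d \<and> {col a, col b} = {col c, col d}"
  then have "col ` {a, b, c, d} = {col a, col b}" by auto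
  then show "o_condition {a, b, c, d} {{a, b}, {c, d}} col" using pairs unfolding o_condition_def by auto
qed

lemma orientation_cells_incident:
  assumes G: "embedded_4reg V E ends emb" and x: "x \<in> V"
    and o: "orientation_at E ends emb x Cs" and C: "C \<in> Cs"
  shows "C \<subseteq> inc_edges E ends x"
proof -
  have finI: "finite (inc_edges E ends x)"
    using G unfolding embedded_4reg_def multigraph_def inc_edges_def by simp
  have len: "length (emb x) = 4" and ms: "mset (emb x) = inc_mset E ends x"
    using G x unfolding embedded_4reg_def by auto
  have "set (emb x) = set_mset (inc_mset E ends x)" using ms by (metis set_mset_mset)
  also have "\<dots> \<subseteq> inc_edges E ends x"
    unfolding inc_mset_def set_mset_sum[OF finI] by (auto split: if_splits)
  finally have "i < 4 \<Longrightarrow> emb x ! i \<in> inc_edges E ends x" for i using len nth_mem by fastforce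
  then show ?thesis using o C unfolding orientation_at_def Let_def
    by (elim disjE exE conjE) (auto simp: inc_edges_def)
qed

lemma proj_Some_in_image:
  "x \<in> A \<Longrightarrow> Some x \<in> proj A ` S \<longleftrightarrow> x \<in> S"
  unfolding proj_def by (auto split: if_splits intro: rev_image_eqI)

lemma proj_None_in_image: "None \<in> proj A ` S \<longleftrightarrow> \<not> S \<subseteq> A"
  unfolding proj_def by (auto split: if_splits intro: rev_image_eqI)

lemma split_inc_old:
  assumes x: "x \<in> A" and E: "{ea, eb, t, b} \<subseteq> E"
    and edges_at_x: "\<forall>e\<in>E. x \<in> ends e \<longrightarrow> ends e \<subseteq> A \<or> e \<in> {ea, eb, t, b}"
  shows "inc_edges (split_E E ends A ea eb t b) (split_ends ends A) (Some x) = inc_edges E ends x"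
  using assms unfolding inc_edges_def split_E_def split_ends_def proj_Some_in_image[OF x] by blast

lemma split_inc_new:
  assumes "\<forall>e\<in>{ea, eb, t, b}. \<not> ends e \<subseteq> A"
  shows "inc_edges (split_E E ends A ea eb t b) (split_ends ends A) None = {ea, eb, t, b}"
  using assms unfolding inc_edges_def split_E_def split_ends_def proj_None_in_image by blast

lemma split_colouring_new_vertex:
  assumes c: "o_colouring (split_V A) (split_E E ends A ea eb t b) (split_ends ends A)
                (split_sigma \<sigma> ea eb t b) c"
    and crossing: "\<forall>e\<in>{ea, eb, t, b}. \<not> ends e \<subseteq> A"
  shows "c ea \<noteq> c eb \<and> c t \<noteq> c b \<and> {c ea, c eb} = {c t, c b}"
proof -
  have "o_condition {ea, eb, t, b} {{ea, eb}, {t, b}} c"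
    using c split_inc_new[OF crossing, of E]
    unfolding o_colouring_iff_o_condition split_V_def split_sigma_def by auto
  then show ?thesis unfolding o_condition_two_pairs .
qed

lemma split_colouring_old_vertex:
  assumes c: "o_colouring (split_V A) (split_E E ends A ea eb t b) (split_ends ends A)
                (split_sigma \<sigma> ea eb t b) c"
    and x: "x \<in> A" and E: "{ea, eb, t, b} \<subseteq> E"
    and edges_at_x: "\<forall>e\<in>E. x \<in> ends e \<longrightarrow> ends e \<subseteq> A \<or> e \<in> {ea, eb, t, b}"
  shows "o_condition (inc_edges E ends x) (\<sigma> x) c"
  using c split_inc_old[OF x E edges_at_x]
  unfolding o_colouring_iff_o_condition split_V_def split_sigma_def using x by auto

locale two_piece_cut =
  fixes V :: "'v set" and E :: "'e set" and ends :: "'e \<Rightarrow> 'v set"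
    and \<sigma> :: "'v \<Rightarrow> 'e set set" and v :: 'v and A1 A2 :: "'v set"
    and e1 e2 e3 e4 t b :: 'e
  assumes finite_E: "finite E"
    and ends_nonempty: "\<forall>e\<in>E. ends e \<noteq> {}"
    and cells_at_vertices: "\<forall>x\<in>V. \<forall>C\<in>\<sigma> x. C \<subseteq> inc_edges E ends x"
    and parts: "A1 \<union> A2 = V - {v}" "A1 \<inter> A2 = {}"
    and inE: "{e1, e2, e3, e4, t, b} \<subseteq> E"
    and dist: "distinct [e1, e2, e3, e4, t, b]"
    and cross: "{e\<in>E. \<not> (ends e \<subseteq> A1 \<or> ends e \<subseteq> A2)} = {e1, e2, e3, e4, t, b}"
    and e1: "\<exists>a\<in>A1. ends e1 = {v, a}" and e2: "\<exists>a\<in>A1. ends e2 = {v, a}"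
    and e3: "\<exists>a\<in>A2. ends e3 = {v, a}" and e4: "\<exists>a\<in>A2. ends e4 = {v, a}"
    and t: "\<exists>x\<in>A1. \<exists>y\<in>A2. ends t = {x, y}"
    and b: "\<exists>x\<in>A1. \<exists>y\<in>A2. ends b = {x, y}"
    and \<sigma>v: "\<sigma> v = {{e1, e2}, {e3, e4}}"
begin

lemma swapped: "two_piece_cut V E ends \<sigma> v A2 A1 e3 e4 e1 e2 t b"
proof unfold_locales
  show "A2 \<union> A1 = V - {v}" "A2 \<inter> A1 = {}" using parts by auto
  show "{e3, e4, e1, e2, t, b} \<subseteq> E" using inE by auto
  show "distinct [e3, e4, e1, e2, t, b]" using dist by auto
  show "{e\<in>E. \<not> (ends e \<subseteq> A2 \<or> ends e \<subseteq> A1)} = {e3, e4, e1, e2, t, b}" using cross by auto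
  show "\<exists>x\<in>A2. \<exists>y\<in>A1. ends t = {x, y}" "\<exists>x\<in>A2. \<exists>y\<in>A1. ends b = {x, y}"
    using t b by (auto simp: insert_commute)
  show "\<sigma> v = {{e3, e4}, {e1, e2}}" using \<sigma>v by auto
qed (use finite_E ends_nonempty cells_at_vertices e1 e2 e3 e4 in auto)

lemma v_outside: "v \<notin> A1" "v \<notin> A2"
  using parts by auto

lemma crossing_cases: "e \<in> E \<Longrightarrow> ends e \<subseteq> A1 \<or> ends e \<subseteq> A2 \<or> e \<in> {e1, e2, e3, e4, t, b}"
  using cross by blast

lemma crossing_edges: "\<forall>e\<in>{e1, e2, t, b}. \<not> ends e \<subseteq> A1"
  using e1 e2 t b v_outside parts(2) by auto

lemma edges_at_A1:
  assumes x: "x \<in> A1"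
  shows "\<forall>e\<in>E. x \<in> ends e \<longrightarrow> ends e \<subseteq> A1 \<or> e \<in> {e1, e2, t, b}"
proof (intro ballI impI)
  fix e assume e: "e \<in> E" "x \<in> ends e"
  show "ends e \<subseteq> A1 \<or> e \<in> {e1, e2, t, b}"
  proof (cases "ends e \<subseteq> A1")
    case False
    moreover have "\<not> ends e \<subseteq> A2" using e x parts(2) by auto
    ultimately have "e \<in> {e1, e2, e3, e4, t, b}" using crossing_cases e by blast
    moreover have "e \<noteq> e3" "e \<noteq> e4" using e3 e4 e x v_outside parts(2) by auto
    ultimately show ?thesis by auto
  qed simp
qed

lemma split_edges_subset: "split_E E ends A1 e1 e2 t b \<subseteq> E"
  using inE unfolding split_E_def by auto

lemma edges_at_v: "inc_edges E ends v = {e1, e2, e3, e4}"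
proof
  show "{e1, e2, e3, e4} \<subseteq> inc_edges E ends v"
    using inE e1 e2 e3 e4 unfolding inc_edges_def by auto
  show "inc_edges E ends v \<subseteq> {e1, e2, e3, e4}"
  proof
    fix e assume e: "e \<in> inc_edges E ends v"
    then have "e \<in> {e1, e2, e3, e4, t, b}"
      using crossing_cases v_outside unfolding inc_edges_def by blast
    moreover have "v \<notin> ends t" "v \<notin> ends b" using t b v_outside by auto
    ultimately show "e \<in> {e1, e2, e3, e4}" using e unfolding inc_edges_def by auto
  qed
qed

lemma split_edges_cover:
  "E \<subseteq> split_E E ends A1 e1 e2 t b \<union> split_E E ends A2 e3 e4 t b"
  using crossing_cases unfolding split_E_def by auto

lemma split_edges_overlap:
  "split_E E ends A1 e1 e2 t b \<inter> split_E E ends A2 e3 e4 t b \<subseteq> {t, b}"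
proof
  fix e assume e: "e \<in> split_E E ends A1 e1 e2 t b \<inter> split_E E ends A2 e3 e4 t b"
  have side1: "ends e \<subseteq> A1 \<or> e \<in> {e1, e2, t, b}" and side2: "ends e \<subseteq> A2 \<or> e \<in> {e3, e4, t, b}"
    using e unfolding split_E_def by auto
  have "ends e \<noteq> {}" using e ends_nonempty inE unfolding split_E_def by auto
  then have "\<not> (ends e \<subseteq> A1 \<and> ends e \<subseteq> A2)" using parts(2) by blast
  moreover have "v \<in> ends e" if "e \<in> {e1, e2, e3, e4}" using that e1 e2 e3 e4 by auto
  ultimately show "e \<in> {t, b}" using side1 side2 dist v_outside by auto
qed

context
  fixes c1 c2 c :: "'e \<Rightarrow> nat" and g :: "nat \<Rightarrow> nat"
  assumes o1: "o_colouring (split_V A1) (split_E E ends A1 e1 e2 t b) (split_ends ends A1)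
                 (split_sigma \<sigma> e1 e2 t b) c1"
    and o2: "o_colouring (split_V A2) (split_E E ends A2 e3 e4 t b) (split_ends ends A2)
                 (split_sigma \<sigma> e3 e4 t b) c2"
    and inj: "inj_on g (c2 ` split_E E ends A2 e3 e4 t b)"
    and gt: "g (c2 t) = c1 t" and gb: "g (c2 b) = c1 b"
    and on1: "\<forall>e\<in>split_E E ends A1 e1 e2 t b. c e = c1 e"
    and on2: "\<forall>e\<in>split_E E ends A2 e3 e4 t b. c e = g (c2 e)"
begin

lemma glued_condition_at_A1:
  assumes x: "x \<in> A1"
  shows "o_condition (inc_edges E ends x) (\<sigma> x) c"
proof -
  have E: "{e1, e2, t, b} \<subseteq> E" using inE by auto
  have cells: "\<forall>C\<in>\<sigma> x. C \<subseteq> inc_edges E ends x" using cells_at_vertices x parts by blast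
  have "inc_edges E ends x \<subseteq> split_E E ends A1 e1 e2 t b"
    using split_inc_old[OF x E edges_at_A1[OF x]] unfolding inc_edges_def by blast
  then have "\<forall>e\<in>inc_edges E ends x. c e = id (c1 e)" using on1 by auto
  then show ?thesis
    by (rule o_condition_rename[OF split_colouring_old_vertex[OF o1 x E edges_at_A1[OF x]]
          cells inj_on_id])
qed

lemma glued_condition_at_A2:
  assumes x: "x \<in> A2"
  shows "o_condition (inc_edges E ends x) (\<sigma> x) c"
proof -
  interpret swap: two_piece_cut V E ends \<sigma> v A2 A1 e3 e4 e1 e2 t b by (rule swapped)
  have E: "{e3, e4, t, b} \<subseteq> E" using inE by auto
  have cells: "\<forall>C\<in>\<sigma> x. C \<subseteq> inc_edges E ends x" using cells_at_vertices x parts by blast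
  have sub: "inc_edges E ends x \<subseteq> split_E E ends A2 e3 e4 t b"
    using split_inc_old[OF x E swap.edges_at_A1[OF x]] unfolding inc_edges_def by blast
  then have "inj_on g (c2 ` inc_edges E ends x)" by (intro inj_on_subset[OF inj] image_mono)
  moreover have "\<forall>e\<in>inc_edges E ends x. c e = g (c2 e)" using on2 sub by auto
  ultimately show ?thesis
    by (rule o_condition_rename[OF split_colouring_old_vertex[OF o2 x E swap.edges_at_A1[OF x]]
          cells])
qed

lemma glued_condition_at_v: "o_condition (inc_edges E ends v) (\<sigma> v) c"
proof -
  interpret swap: two_piece_cut V E ends \<sigma> v A2 A1 e3 e4 e1 e2 t b by (rule swapped)
  have n1: "c1 e1 \<noteq> c1 e2 \<and> c1 t \<noteq> c1 b \<and> {c1 e1, c1 e2} = {c1 t, c1 b}"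
    by (rule split_colouring_new_vertex[OF o1 crossing_edges])
  have n2: "c2 e3 \<noteq> c2 e4 \<and> c2 t \<noteq> c2 b \<and> {c2 e3, c2 e4} = {c2 t, c2 b}"
    by (rule split_colouring_new_vertex[OF o2 swap.crossing_edges])
  have in1: "e1 \<in> split_E E ends A1 e1 e2 t b" "e2 \<in> split_E E ends A1 e1 e2 t b"
    and in2: "e3 \<in> split_E E ends A2 e3 e4 t b" "e4 \<in> split_E E ends A2 e3 e4 t b"
    unfolding split_E_def by auto
  have "g (c2 e3) \<noteq> g (c2 e4)" using inj_on_contraD[OF inj] n2 in2 by blast
  then have distinct34: "c e3 \<noteq> c e4" using on2 in2 by simp
  have "{c e3, c e4} = g ` {c2 e3, c2 e4}" using on2 in2 by simp
  also have "\<dots> = g ` {c2 t, c2 b}" using n2 by simp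
  also have "\<dots> = {c1 e1, c1 e2}" using gt gb n1 by simp
  also have "\<dots> = {c e1, c e2}" using on1 in1 by simp
  finally have "o_condition {e1, e2, e3, e4} {{e1, e2}, {e3, e4}} c"
    using distinct34 n1 on1 in1 unfolding o_condition_two_pairs by auto
  then show ?thesis using edges_at_v \<sigma>v by simp
qed

lemma glued_o_colouring: "o_colouring V E ends \<sigma> c"
  unfolding o_colouring_iff_o_condition
proof
  fix x assume "x \<in> V"
  then consider "x \<in> A1" | "x \<in> A2" | "x = v" using parts by blast
  then show "o_condition (inc_edges E ends x) (\<sigma> x) c"
    using glued_condition_at_A1 glued_condition_at_A2 glued_condition_at_v by cases auto
qed

end

lemma glue_k_o_colourings:
  assumes c1: "k_o_colouring (split_V A1) (split_E E ends A1 e1 e2 t b) (split_ends ends A1)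
                 (split_sigma \<sigma> e1 e2 t b) k c1"
    and c2: "k_o_colouring (split_V A2) (split_E E ends A2 e3 e4 t b) (split_ends ends A2)
                 (split_sigma \<sigma> e3 e4 t b) k c2"
  shows "\<exists>c. k_o_colouring V E ends \<sigma> k c"
proof -
  interpret swap: two_piece_cut V E ends \<sigma> v A2 A1 e3 e4 e1 e2 t b by (rule swapped)
  let ?E1 = "split_E E ends A1 e1 e2 t b" and ?E2 = "split_E E ends A2 e3 e4 t b"
  note o1 = c1[unfolded k_o_colouring_def, THEN conjunct1]
    and o2 = c2[unfolded k_o_colouring_def, THEN conjunct1]
  have tb: "t \<in> ?E1" "b \<in> ?E1" "t \<in> ?E2" "b \<in> ?E2" unfolding split_E_def by auto
  have n1: "c1 t \<noteq> c1 b" using split_colouring_new_vertex[OF o1 crossing_edges] by blast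
  have n2: "c2 t \<noteq> c2 b" using split_colouring_new_vertex[OF o2 swap.crossing_edges] by blast
  have fin1: "finite (c1 ` ?E1)" using finite_E split_edges_subset by (auto intro: finite_subset)
  have fin2: "finite (c2 ` ?E2)" using finite_E swap.split_edges_subset by (auto intro: finite_subset)
  have k1: "card (c1 ` ?E1) \<le> k" and k2: "card (c2 ` ?E2) \<le> k"
    using c1 c2 unfolding k_o_colouring_def by blast+
  obtain g where g: "inj_on g (c2 ` ?E2)" "g (c2 t) = c1 t" "g (c2 b) = c1 b"
    and bound: "card (c1 ` ?E1 \<union> g ` c2 ` ?E2) \<le> k"
    by (rule colour_renaming[OF infinite_UNIV_nat fin1 fin2 imageI imageI n1 imageI imageI n2 k1 k2])
      (use tb in simp_all)
  define c where "c e = (if e \<in> ?E1 then c1 e else g (c2 e))" for e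
  have on1: "\<forall>e\<in>?E1. c e = c1 e" unfolding c_def by simp
  have on2: "\<forall>e\<in>?E2. c e = g (c2 e)" using split_edges_overlap g unfolding c_def by auto
  have "o_colouring V E ends \<sigma> c" by (rule glued_o_colouring[OF o1 o2 g on1 on2])
  moreover have "card (c ` E) \<le> k"
  proof -
    have "c ` E \<subseteq> c ` ?E1 \<union> c ` ?E2" using split_edges_cover by blast
    also have "c ` ?E1 = c1 ` ?E1" by (intro image_cong) (use on1 in auto)
    also have "c ` ?E2 = g ` c2 ` ?E2" unfolding image_image by (intro image_cong) (use on2 in auto)
    finally show ?thesis using bound fin1 fin2 by (meson card_mono finite_UnI finite_imageI order_trans)
  qed
  ultimately show ?thesis unfolding k_o_colouring_def by blast
qed

end

theorem lemma3p3:
  fixes V :: "'v set" and E :: "'e set" and ends :: "'e \<Rightarrow> 'v set"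
    and emb :: "'v \<Rightarrow> 'e list" and \<sigma> :: "'v \<Rightarrow> 'e set set"
    and v :: 'v and A1 A2 :: "'v set" and e1 e2 e3 e4 t b :: 'e and k :: nat
  assumes G: "embedded_4reg V E ends emb"
    and \<sigma>: "vertex_orientation V E ends emb \<sigma>"
    and v: "v \<in> V"
    and A: "A1 \<union> A2 = V - {v}" "A1 \<inter> A2 = {}" "A1 \<noteq> {}" "A2 \<noteq> {}"
    and inE: "{e1, e2, e3, e4, t, b} \<subseteq> E"
    and dist: "distinct [e1, e2, e3, e4, t, b]"
    and cross: "{e\<in>E. \<not> (ends e \<subseteq> A1 \<or> ends e \<subseteq> A2)} = {e1, e2, e3, e4, t, b}"
    and e1: "\<exists>a\<in>A1. ends e1 = {v, a}" and e2: "\<exists>a\<in>A1. ends e2 = {v, a}"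
    and e3: "\<exists>a\<in>A2. ends e3 = {v, a}" and e4: "\<exists>a\<in>A2. ends e4 = {v, a}"
    and t: "\<exists>x\<in>A1. \<exists>y\<in>A2. ends t = {x, y}"
    and b: "\<exists>x\<in>A1. \<exists>y\<in>A2. ends b = {x, y}"
    and \<sigma>v: "\<sigma> v = {{e1, e2}, {e3, e4}}"
    and col1: "\<exists>c1. k_o_colouring (split_V A1) (split_E E ends A1 e1 e2 t b)
                 (split_ends ends A1) (split_sigma \<sigma> e1 e2 t b) k c1"
    and col2: "\<exists>c2. k_o_colouring (split_V A2) (split_E E ends A2 e3 e4 t b)
                 (split_ends ends A2) (split_sigma \<sigma> e3 e4 t b) k c2"
  shows "\<exists>c. k_o_colouring V E ends \<sigma> k c"
proof -
  have "finite E" "\<forall>e\<in>E. ends e \<noteq> {}"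
    using G unfolding embedded_4reg_def multigraph_def by auto
  moreover have "\<forall>x\<in>V. \<forall>C\<in>\<sigma> x. C \<subseteq> inc_edges E ends x"
    using orientation_cells_incident[OF G] \<sigma> unfolding vertex_orientation_def by blast
  ultimately interpret two_piece_cut V E ends \<sigma> v A1 A2 e1 e2 e3 e4 t b
    using A(1,2) inE dist cross e1 e2 e3 e4 t b \<sigma>v by unfold_locales
  obtain c1 c2 where
    "k_o_colouring (split_V A1) (split_E E ends A1 e1 e2 t b) (split_ends ends A1)
       (split_sigma \<sigma> e1 e2 t b) k c1"
    "k_o_colouring (split_V A2) (split_E E ends A2 e3 e4 t b) (split_ends ends A2)
       (split_sigma \<sigma> e3 e4 t b) k c2"
    using col1 col2 by blast
  then show ?thesis by (rule glue_k_o_colourings)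
qed

end
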